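(* Let $\vec{D}_n$ be the oriented diameter of the directed arrowhead $\vec{\mathcal{AT}}_n$. Then $\vec{D}_0=0$ and $\vec{D}_n=2\vec{D}_{n-1}+1$ for all $n>0$.
   Context: For $n\in\mathbb{N}$ let $G_n=\mathbb{Z}_{2^n}\times\mathbb{Z}_{2^n}$ (additive group). Let $S^+=\{(-1,-1),(1,0),(0,1)\}$. The directed arrowhead $\vec{\mathcal{AT}}_n$ is the Cayley digraph $\Gamma(G_n,S^+)$: vertex set $G_n$, with an arc $u\to u+s$ for each $u\in G_n$ and $s\in S^+$ (arithmetic modulo $2^n$). The oriented diameter is the maximum, over ordered pairs $(u,v)$ of vertices, of the length of a shortest directed path from $u$ to $v$. *)

theory Defs
  imports Main
begin

text \<open>Vertices of G_n = Z_{2^n} x Z_{2^n}, represented by canonical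
representatives in {0..<2^n} x {0..<2^n}.\<close>
definition at_vertices :: "nat \<Rightarrow> (int \<times> int) set" where
  "at_vertices n = {0..<2^n} \<times> {0..<2^n}"

definition at_gens :: "(int \<times> int) set" where
  "at_gens = {(-1,-1), (1,0), (0,1)}"

definition at_arcs :: "nat \<Rightarrow> ((int \<times> int) \<times> (int \<times> int)) set" where
  "at_arcs n = {(u, v). u \<in> at_vertices n \<and>
     (\<exists>s\<in>at_gens. v = ((fst u + fst s) mod 2^n, (snd u + snd s) mod 2^n))}"

definition at_dist :: "nat \<Rightarrow> int \<times> int \<Rightarrow> int \<times> int \<Rightarrow> nat" where
  "at_dist n u v = (LEAST k. (u, v) \<in> (at_arcs n) ^^ k)"

definition at_odiam :: "nat \<Rightarrow> nat" where
  "at_odiam n = Max {at_dist n u v | u v. u \<in> at_vertices n \<and> v \<in> at_vertices n}"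

end

theory Submission
  imports Defs
begin

text \<open>Since the generators commute, a walk of length \<open>k\<close> is determined up to order by the
numbers \<open>a, b, c\<close> of steps along \<open>(1,0), (0,1), (-1,-1)\<close>, and it leads from \<open>u\<close> to
\<open>u + (a - c, b - c)\<close>. To realise a displacement \<open>(x, y)\<close> modulo \<open>N = 2^n\<close> with \<open>c\<close>
diagonal steps one needs at least \<open>c + (x + c) mod N + (y + c) mod N\<close> steps. Choosing
\<open>c \<in> {0, N - x, N - y}\<close> keeps this below \<open>N\<close>, because \<open>3\<close> does not divide \<open>N\<close>;
for \<open>(x, y) = (\<lfloor>N/3\<rfloor>, 2\<lfloor>N/3\<rfloor> + 1)\<close> every \<open>c\<close> costs at least \<open>N - 1\<close>. So the oriented
diameter is \<open>2^n - 1\<close>, which satisfies the recurrence.\<close>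

lemma mod_diff_add_left_eq: "((z::int) mod N - w + c) mod N = (z - w + c) mod N"
  by (metis mod_add_left_eq mod_diff_left_eq)

lemma mod_eq_diff_self: "N \<le> z \<Longrightarrow> z < 2 * N \<Longrightarrow> (z::int) mod N = z - N"
  using mod_pos_pos_trivial[of "z - N" N] by simp

lemma mod_eq_add_self: "0 \<le> z + N \<Longrightarrow> z < 0 \<Longrightarrow> (z::int) mod N = z + N"
  using mod_pos_pos_trivial[of "z + N" N] by simp

lemma three_not_dvd_power_two: "\<not> 3 dvd (2::int) ^ n"
proof (induction n)
  case (Suc n)
  have "\<not> 3 dvd (x::int) \<Longrightarrow> \<not> 3 dvd 2 * x" for x
    by presburger
  with Suc show ?case by simp
qed simp

lemma div_three_bounds:
  fixes N :: int
  assumes "\<not> 3 dvd N"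
  shows "3 * (N div 3) + 1 \<le> N" "N \<le> 3 * (N div 3) + 2"
proof -
  have "N mod 3 \<noteq> 0"
    using assms by (simp add: dvd_eq_mod_eq_0)
  moreover have "N = 3 * (N div 3) + N mod 3" "N mod 3 < 3"
    by simp_all
  ultimately show "3 * (N div 3) + 1 \<le> N" "N \<le> 3 * (N div 3) + 2"
    by linarith+
qed

text \<open>\<open>walk_length N x y c\<close> is the least number of steps of a walk that uses exactly \<open>c\<close>
steps \<open>(-1,-1)\<close> and has displacement \<open>(x, y)\<close> modulo \<open>N\<close>.\<close>

definition walk_length :: "int \<Rightarrow> int \<Rightarrow> int \<Rightarrow> int \<Rightarrow> int" where
  "walk_length N x y c = c + (x + c) mod N + (y + c) mod N"

lemma walk_length_commute: "walk_length N x y c = walk_length N y x c"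
  by (simp add: walk_length_def)

lemma walk_length_mod: "walk_length N (x mod N) (y mod N) c = walk_length N x y c"
  by (simp add: walk_length_def mod_add_left_eq)

lemma walk_length_wrap: "walk_length N x y (N - x) = N - x + (y - x) mod N"
proof -
  have "(y + (N - x)) mod N = ((y - x) + N) mod N"
    by (simp add: algebra_simps)
  then show ?thesis
    by (simp add: walk_length_def)
qed

lemma walk_length_wrap_le:
  fixes N x y :: int
  assumes "0 \<le> x" "x < N" "0 \<le> y" "y < N"
    and "x \<le> y \<and> y < 2 * x \<or> y < x \<and> N + y < 2 * x"
  shows "walk_length N x y (N - x) \<le> N - 1"
  using assms mod_pos_pos_trivial[of "y - x" N] mod_eq_add_self[of "y - x" N]
  unfolding walk_length_wrap by auto

lemma walk_length_upper_bound:
  fixes N x y :: int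
  assumes "\<not> 3 dvd N" "0 \<le> x" "x < N" "0 \<le> y" "y < N"
  shows "\<exists>c\<ge>0. walk_length N x y c \<le> N - 1"
proof -
  \<comment> \<open>the only configuration not covered by \<open>c \<in> {0, N - x, N - y}\<close> is \<open>{x, y} = {N/3, 2N/3}\<close>\<close>
  have "3 * x \<noteq> N" "3 * y \<noteq> N"
    using assms(1) by auto
  then have "x + y < N \<or> (x \<le> y \<and> y < 2 * x \<or> y < x \<and> N + y < 2 * x)
      \<or> (y \<le> x \<and> x < 2 * y \<or> x < y \<and> N + x < 2 * y)"
    using assms(2-5) by linarith
  then consider "x + y < N"
    | "walk_length N x y (N - x) \<le> N - 1"
    | "walk_length N x y (N - y) \<le> N - 1"
    using walk_length_wrap_le[of x N y] walk_length_wrap_le[of y N x] assms(2-5)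
    by (auto simp: walk_length_commute)
  then show ?thesis
  proof cases
    case 1
    then have "walk_length N x y 0 \<le> N - 1"
      using assms(2-5) by (simp add: walk_length_def)
    then show ?thesis by blast
  next
    case 2
    then show ?thesis using assms(3) by (intro exI[of _ "N - x"]) simp
  next
    case 3
    then show ?thesis using assms(5) by (intro exI[of _ "N - y"]) simp
  qed
qed

lemma walk_length_lower_bound:
  fixes N c :: int
  assumes "0 < N" "\<not> 3 dvd N" "0 \<le> c"
  shows "N - 1 \<le> walk_length N (N div 3) (2 * (N div 3) + 1) c"
proof -
  define x where "x = N div 3"
  have N: "3 * x + 1 \<le> N" "N \<le> 3 * x + 2"
    using div_three_bounds[OF assms(2)] by (simp_all add: x_def)
  consider "c < N - 2 * x - 1" | "N - 2 * x - 1 \<le> c" "c < N - x" | "N - x \<le> c" "c < N" | "N \<le> c"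
    by (meson not_less)
  then have "N - 1 \<le> c + (x + c) mod N + (2 * x + 1 + c) mod N"
  proof cases
    case 1
    have "(x + c) mod N = x + c" "(2 * x + 1 + c) mod N = 2 * x + 1 + c"
      by (rule mod_pos_pos_trivial; use 1 N assms(3) in linarith)+
    then show ?thesis using N assms(3) by linarith
  next
    case 2
    have "(x + c) mod N = x + c"
      by (rule mod_pos_pos_trivial; use 2 N assms(3) in linarith)
    moreover have "(2 * x + 1 + c) mod N = 2 * x + 1 + c - N"
      by (rule mod_eq_diff_self; use 2 N assms(3) in linarith)
    ultimately show ?thesis using 2 N by linarith
  next
    case 3
    have "(x + c) mod N = x + c - N" "(2 * x + 1 + c) mod N = 2 * x + 1 + c - N"
      by (rule mod_eq_diff_self; use 3 N assms(3) in linarith)+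
    then show ?thesis using 3 N by linarith
  next
    case 4
    have "0 \<le> (x + c) mod N" "0 \<le> (2 * x + 1 + c) mod N"
      using assms(1) by simp_all
    then show ?thesis using 4 by linarith
  qed
  then show ?thesis
    by (simp add: walk_length_def x_def)
qed

definition at_shift :: "nat \<Rightarrow> int \<times> int \<Rightarrow> int \<Rightarrow> int \<Rightarrow> int \<times> int" where
  "at_shift n u p q = ((fst u + p) mod 2^n, (snd u + q) mod 2^n)"

lemma at_shift_in_vertices: "at_shift n u p q \<in> at_vertices n"
  by (simp add: at_shift_def at_vertices_def)

lemma at_shift_zero: "u \<in> at_vertices n \<Longrightarrow> at_shift n u 0 0 = u"
  by (auto simp: at_shift_def at_vertices_def)

lemma at_shift_shift: "at_shift n (at_shift n u p q) p' q' = at_shift n u (p + p') (q + q')"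
  by (simp add: at_shift_def mod_add_left_eq add.assoc)

lemma at_shift_cong:
  "p mod 2^n = p' mod 2^n \<Longrightarrow> q mod 2^n = q' mod 2^n \<Longrightarrow> at_shift n u p q = at_shift n u p' q'"
  by (metis at_shift_def mod_add_right_eq)

lemma at_shift_diff: "v \<in> at_vertices n \<Longrightarrow> at_shift n u (fst v - fst u) (snd v - snd u) = v"
  by (auto simp: at_shift_def at_vertices_def)

lemma at_arcs_iff:
  "(u, v) \<in> at_arcs n \<longleftrightarrow> u \<in> at_vertices n \<and>
     (v = at_shift n u (-1) (-1) \<or> v = at_shift n u 1 0 \<or> v = at_shift n u 0 1)"
  by (auto simp: at_arcs_def at_gens_def at_shift_def)

lemma at_arcs_relpow_iff:
  assumes "u \<in> at_vertices n"
  shows "(u, v) \<in> at_arcs n ^^ k \<longleftrightarrow>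
    (\<exists>a b c. a + b + c = k \<and> v = at_shift n u (int a - int c) (int b - int c))"
proof (induction k arbitrary: v)
  case 0
  show ?case using at_shift_zero[OF assms] by auto
next
  case (Suc k)
  show ?case
  proof
    assume "(u, v) \<in> at_arcs n ^^ Suc k"
    then obtain a b c w where abc: "a + b + c = k" "w = at_shift n u (int a - int c) (int b - int c)"
      and "(w, v) \<in> at_arcs n"
      using Suc.IH by auto
    then consider "v = at_shift n w (-1) (-1)" | "v = at_shift n w 1 0" | "v = at_shift n w 0 1"
      by (auto simp: at_arcs_iff)
    then show "\<exists>a b c. a + b + c = Suc k \<and> v = at_shift n u (int a - int c) (int b - int c)"
    proof cases
      case 1
      show ?thesis
        by (rule exI[of _ a], rule exI[of _ b], rule exI[of _ "Suc c"])
          (use abc 1 in \<open>simp add: at_shift_shift algebra_simps\<close>)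
    next
      case 2
      show ?thesis
        by (rule exI[of _ "Suc a"], rule exI[of _ b], rule exI[of _ c])
          (use abc 2 in \<open>simp add: at_shift_shift algebra_simps\<close>)
    next
      case 3
      show ?thesis
        by (rule exI[of _ a], rule exI[of _ "Suc b"], rule exI[of _ c])
          (use abc 3 in \<open>simp add: at_shift_shift algebra_simps\<close>)
    qed
  next
    assume "\<exists>a b c. a + b + c = Suc k \<and> v = at_shift n u (int a - int c) (int b - int c)"
    then obtain a b c where abc: "a + b + c = Suc k" "v = at_shift n u (int a - int c) (int b - int c)"
      by blast
    obtain a' b' c' p q where step: "a' + b' + c' = k" "(p, q) \<in> at_gens"
      "int a - int c = int a' - int c' + p" "int b - int c = int b' - int c' + q"
    proof -
      consider a' where "a = Suc a'" | b' where "b = Suc b'" | c' where "c = Suc c'"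
        using abc(1) by (cases a; cases b) auto
      then show thesis
        by cases (use abc(1) that in \<open>force simp: at_gens_def\<close>)+
    qed
    define w where "w = at_shift n u (int a' - int c') (int b' - int c')"
    have "(u, w) \<in> at_arcs n ^^ k"
      using Suc.IH step(1) w_def by blast
    moreover have "(w, v) \<in> at_arcs n"
      using step(2-4) abc(2) by (auto simp: at_arcs_iff at_gens_def w_def at_shift_shift at_shift_in_vertices)
    ultimately show "(u, v) \<in> at_arcs n ^^ Suc k"
      by auto
  qed
qed

lemma walk_length_le_path_length:
  assumes "u \<in> at_vertices n" "(u, v) \<in> at_arcs n ^^ k"
  shows "\<exists>c\<ge>0. walk_length (2^n) (fst v - fst u) (snd v - snd u) c \<le> int k"
proof -
  obtain a b c where abc: "a + b + c = k" "v = at_shift n u (int a - int c) (int b - int c)"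
    using assms at_arcs_relpow_iff by blast
  have "(fst v - fst u + int c) mod 2^n = int a mod 2^n"
    by (simp add: abc(2) at_shift_def mod_diff_add_left_eq)
  moreover have "(snd v - snd u + int c) mod 2^n = int b mod 2^n"
    by (simp add: abc(2) at_shift_def mod_diff_add_left_eq)
  ultimately have "walk_length (2^n) (fst v - fst u) (snd v - snd u) (int c) \<le> int a + int b + int c"
    unfolding walk_length_def using zmod_le_nonneg_dividend[of "int a"] zmod_le_nonneg_dividend[of "int b"]
    by (simp add: add_mono)
  with abc(1) show ?thesis
    by (intro exI[of _ "int c"]) auto
qed

lemma at_arcs_relpow_walk_length:
  assumes "u \<in> at_vertices n" "v \<in> at_vertices n" "0 \<le> c"
  shows "(u, v) \<in> at_arcs n ^^ nat (walk_length (2^n) (fst v - fst u) (snd v - snd u) c)"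
proof -
  define a where "a = nat ((fst v - fst u + c) mod 2^n)"
  define b where "b = nat ((snd v - snd u + c) mod 2^n)"
  have "v = at_shift n u (int a - int (nat c)) (int b - int (nat c))"
    by (subst at_shift_diff[OF assms(2), symmetric], rule at_shift_cong)
      (simp_all add: a_def b_def assms(3) mod_diff_left_eq)
  moreover have "a + b + nat c = nat (walk_length (2^n) (fst v - fst u) (snd v - snd u) c)"
    by (simp add: a_def b_def walk_length_def assms(3) nat_add_distrib)
  ultimately show ?thesis
    using at_arcs_relpow_iff[OF assms(1)] by blast
qed

lemma at_arcs_relpow_at_dist:
  assumes "u \<in> at_vertices n" "v \<in> at_vertices n"
  shows "(u, v) \<in> at_arcs n ^^ at_dist n u v"
  unfolding at_dist_def using at_arcs_relpow_walk_length[OF assms order_refl] by (rule LeastI)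

lemma at_dist_le:
  assumes "u \<in> at_vertices n" "v \<in> at_vertices n"
  shows "at_dist n u v \<le> 2^n - 1"
proof -
  define N :: int where "N = 2^n"
  have "0 < N"
    by (simp add: N_def)
  then obtain c where c: "0 \<le> c" "walk_length N ((fst v - fst u) mod N) ((snd v - snd u) mod N) c \<le> N - 1"
    using walk_length_upper_bound[of N "(fst v - fst u) mod N" "(snd v - snd u) mod N"]
      three_not_dvd_power_two[of n, folded N_def] by auto
  then have "(u, v) \<in> at_arcs n ^^ nat (walk_length N (fst v - fst u) (snd v - snd u) c)"
    using at_arcs_relpow_walk_length[OF assms] by (simp add: N_def)
  then have "at_dist n u v \<le> nat (walk_length N (fst v - fst u) (snd v - snd u) c)"
    unfolding at_dist_def by (rule Least_le)
  also have "\<dots> \<le> 2^n - 1"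
    using c(2) by (simp add: walk_length_mod N_def nat_le_iff of_nat_diff)
  finally show ?thesis .
qed

lemma at_dist_witness_ge:
  assumes "0 < n"
  defines "x \<equiv> (2::int)^n div 3"
  shows "(x, 2 * x + 1) \<in> at_vertices n" and "2^n - 1 \<le> at_dist n (0, 0) (x, 2 * x + 1)"
proof -
  have N: "3 * x + 1 \<le> 2^n" "2^n \<le> 3 * x + 2"
    using div_three_bounds[OF three_not_dvd_power_two[of n]] by (simp_all add: x_def)
  moreover have "(2::int) \<le> 2^n"
    using assms(1) self_le_power[of 2 n] by simp
  ultimately show v: "(x, 2 * x + 1) \<in> at_vertices n"
    by (auto simp: at_vertices_def)
  have u: "(0, 0) \<in> at_vertices n"
    by (simp add: at_vertices_def)
  obtain c where "0 \<le> c" "walk_length (2^n) x (2 * x + 1) c \<le> int (at_dist n (0, 0) (x, 2 * x + 1))"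
    using walk_length_le_path_length[OF u at_arcs_relpow_at_dist[OF u v]] by auto
  then have "2^n - 1 \<le> int (at_dist n (0, 0) (x, 2 * x + 1))"
    using walk_length_lower_bound[of "2^n" c] three_not_dvd_power_two[of n] by (simp add: x_def)
  moreover have "int (2^n - 1) = 2^n - 1"
    by (simp add: of_nat_diff)
  ultimately show "2^n - 1 \<le> at_dist n (0, 0) (x, 2 * x + 1)"
    by linarith
qed

lemma at_odiam_eq: "at_odiam n = 2^n - 1"
proof -
  define D where "D = {at_dist n u v | u v. u \<in> at_vertices n \<and> v \<in> at_vertices n}"
  have "D = (\<lambda>(u, v). at_dist n u v) ` (at_vertices n \<times> at_vertices n)"
    by (auto simp: D_def)
  then have "finite D"
    by (simp add: at_vertices_def)
  moreover have "d \<le> 2^n - 1" if "d \<in> D" for d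
    using that at_dist_le by (auto simp: D_def)
  moreover have "2^n - 1 \<in> D"
  proof (cases "n = 0")
    case True
    have u: "(0, 0) \<in> at_vertices n"
      by (simp add: at_vertices_def)
    with True have "2^n - 1 = at_dist n (0, 0) (0, 0)"
      using at_dist_le[OF u u] by simp
    with u show ?thesis
      unfolding D_def by blast
  next
    case False
    define x where "x = (2::int)^n div 3"
    have u: "(0, 0) \<in> at_vertices n"
      by (simp add: at_vertices_def)
    have v: "(x, 2 * x + 1) \<in> at_vertices n"
      using False at_dist_witness_ge(1)[of n] by (simp add: x_def)
    have "2^n - 1 = at_dist n (0, 0) (x, 2 * x + 1)"
      using False at_dist_witness_ge(2)[of n] at_dist_le[OF u v] by (simp add: x_def)
    with u v show ?thesis
      unfolding D_def by blast
  qed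
  ultimately show ?thesis
    unfolding at_odiam_def D_def[symmetric] by (rule Max_eqI)
qed

theorem lemma3:
  shows "at_odiam 0 = 0 \<and> (\<forall>n::nat. n > 0 \<longrightarrow> at_odiam n = 2 * at_odiam (n - 1) + 1)"
proof (intro conjI allI impI)
  show "at_odiam 0 = 0"
    by (simp add: at_odiam_eq)
next
  fix n :: nat
  assume "n > 0"
  then obtain m where "n = Suc m"
    using gr0_implies_Suc by blast
  then have "at_odiam n = 2 * 2^m - 1" "at_odiam (n - 1) = 2^m - 1"
    by (simp_all add: at_odiam_eq)
  moreover have "0 < (2::nat)^m"
    by simp
  ultimately show "at_odiam n = 2 * at_odiam (n - 1) + 1"
    by linarith
qed

end
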